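(* $\log\mathrm{Time}(s)\in O(\mathrm{Space}(s))$; that is, there is a constant $c$ such that for every term $s$ that reduces to an abstraction in at least one step, $\log\mathrm{Time}(s)\le c\cdot\mathrm{Space}(s)$.
   Context: $\mathsf{L}$-terms (de Bruijn): $s::=n\mid st\mid\lambda s$, size $|n|=1+n$, $|\lambda s|=1+|s|$, $|st|=1+|s|+|t|$. Substitution $k^k_u=u$, $n^k_u=n$ ($n\ne k$), $(st)^k_u=(s^k_u)(t^k_u)$, $(\lambda s)^k_u=\lambda(s^{k+1}_u)$. Reduction (deterministic): $(\lambda s)(\lambda t)\succ s^0_{\lambda t}$; $s\succ s'\Rightarrow st\succ s't$; $t\succ t'\Rightarrow(\lambda s)t\succ(\lambda s)t'$. If $s=s_0\succ\cdots\succ s_j$ with $s_j$ an abstraction, then $\mathrm{Time}(s)=j$ and $\mathrm{Space}(s)=\max_i|s_i|$. *)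

theory Defs
  imports Complex_Main
begin

datatype lterm = Var nat | App lterm lterm | Lam lterm

fun tsize :: "lterm \<Rightarrow> nat" where
  "tsize (Var n) = 1 + n"
| "tsize (Lam s) = 1 + tsize s"
| "tsize (App s t) = 1 + tsize s + tsize t"

fun subst :: "lterm \<Rightarrow> nat \<Rightarrow> lterm \<Rightarrow> lterm" where
  "subst (Var n) k u = (if n = k then u else Var n)"
| "subst (App s t) k u = App (subst s k u) (subst t k u)"
| "subst (Lam s) k u = Lam (subst s (Suc k) u)"

inductive step :: "lterm \<Rightarrow> lterm \<Rightarrow> bool" where
  beta: "step (App (Lam s) (Lam t)) (subst s 0 (Lam t))"
| appL: "step s s' \<Longrightarrow> step (App s t) (App s' t)"
| appR: "step t t' \<Longrightarrow> step (App (Lam s) t) (App (Lam s) t')"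

fun is_abs :: "lterm \<Rightarrow> bool" where
  "is_abs (Lam _) = True"
| "is_abs _ = False"

definition reduces_in :: "lterm \<Rightarrow> nat \<Rightarrow> (nat \<Rightarrow> lterm) \<Rightarrow> bool" where
  "reduces_in s j f \<longleftrightarrow> f 0 = s \<and> (\<forall>i<j. step (f i) (f (Suc i))) \<and> is_abs (f j)"

text \<open>Time(s): the (unique, by determinism) length of such a sequence.\<close>
definition Time :: "lterm \<Rightarrow> nat" where
  "Time s = (THE j. \<exists>f. reduces_in s j f)"

definition Space :: "lterm \<Rightarrow> nat" where
  "Space s = (THE m. \<exists>f. reduces_in s (Time s) f \<and> m = (MAX i\<in>{..Time s}. tsize (f i)))"

end

theory Submission
  imports Defs
begin

text \<open>Reduction is deterministic, so a terminating reduction sequence visits pairwise distinct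
  terms; all of them have size at most \<open>Space s\<close>. Encoding terms injectively as words of length
  \<open>tsize\<close> over a four-letter alphabet shows that there are fewer than \<open>4 ^ (m + 1)\<close> terms of size
  at most \<open>m\<close>, hence \<open>Time s < 4 ^ (Space s + 1)\<close> and \<open>log 2 (Time s) \<le> 4 * Space s\<close>.\<close>

lemma abs_no_step: "is_abs x \<Longrightarrow> \<not> step x y"
  by (cases x) (auto elim: step.cases)

lemma Lam_no_step [simp]: "\<not> step (Lam s) y"
  by (simp add: abs_no_step)

inductive_cases step_AppE: "step (App s t) u"

lemma step_deterministic: "step a b \<Longrightarrow> step a c \<Longrightarrow> b = c"
proof (induction arbitrary: c rule: step.induct)
  case (beta s t)
  then show ?case by (auto elim: step_AppE)
next
  case (appL s s' t)
  from appL.prems show ?case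
  proof (rule step_AppE)
    fix s'' assume "c = App s'' t" "step s s''"
    then show ?thesis using appL.IH by simp
  qed (use appL.hyps in auto)
next
  case (appR t t' s)
  from appR.prems show ?case
  proof (rule step_AppE)
    fix t'' s'' assume "Lam s = Lam s''" "c = App (Lam s'') t''" "step t t''"
    then show ?thesis using appR.IH by simp
  qed (use appR.hyps in auto)
qed

lemma reduces_in_agree:
  assumes "reduces_in s j f" "reduces_in s j' g" "i \<le> j" "i \<le> j'"
  shows "f i = g i"
  using assms(3,4)
proof (induction i)
  case 0
  then show ?case using assms(1,2) by (simp add: reduces_in_def)
next
  case (Suc i)
  have "step (f i) (f (Suc i))" "step (g i) (g (Suc i))"
    using assms(1,2) Suc.prems by (auto simp: reduces_in_def)
  with Suc show ?case by (metis Suc_leD step_deterministic)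
qed

lemma reduces_in_length_unique:
  assumes f: "reduces_in s j f" and g: "reduces_in s j' g"
  shows "j = j'"
proof -
  have "\<not> j < j'" if "reduces_in s j f" "reduces_in s j' g" for j j' f g
  proof
    assume "j < j'"
    then have "f j = g j" "step (g j) (g (Suc j))"
      using reduces_in_agree[OF that] that(2) by (auto simp: reduces_in_def)
    then show False using that(1) abs_no_step by (metis reduces_in_def)
  qed
  then show ?thesis using f g by (meson linorder_neqE_nat)
qed

lemma Time_eq: "reduces_in s j f \<Longrightarrow> Time s = j"
  unfolding Time_def using reduces_in_length_unique by blast

lemma Space_eq:
  assumes f: "reduces_in s j f"
  shows "Space s = (MAX i\<in>{..j}. tsize (f i))"
  unfolding Space_def Time_eq[OF f]
proof (rule the_equality)
  show "\<exists>g. reduces_in s j g \<and> (MAX i\<in>{..j}. tsize (f i)) = (MAX i\<in>{..j}. tsize (g i))"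
    using f by blast
next
  fix m assume "\<exists>g. reduces_in s j g \<and> m = (MAX i\<in>{..j}. tsize (g i))"
  then obtain g where g: "reduces_in s j g" and m: "m = (MAX i\<in>{..j}. tsize (g i))" by blast
  have "g i = f i" if "i \<in> {..j}" for i
    using reduces_in_agree[OF g f] that by simp
  then show "m = (MAX i\<in>{..j}. tsize (f i))"
    unfolding m by (metis (no_types, lifting) image_cong)
qed

text \<open>If \<open>f a = f b\<close> with \<open>a < b\<close>, cutting out the loop between \<open>a\<close> and \<open>b\<close> yields a shorter
  reduction sequence, contradicting uniqueness of the length.\<close>

lemma reduces_in_inj_on:
  assumes f: "reduces_in s j f"
  shows "inj_on f {..j}"
proof -
  have "f a \<noteq> f b" if ab: "a < b" "b \<le> j" for a b
  proof
    assume loop: "f a = f b"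
    define g where "g i = f (if i < a then i else i + (b - a))" for i
    have "reduces_in s (j - (b - a)) g"
      unfolding reduces_in_def
    proof (intro conjI allI impI)
      show "g 0 = s"
        using f loop by (auto simp: g_def reduces_in_def)
      show "is_abs (g (j - (b - a)))"
        using f ab by (auto simp: g_def reduces_in_def)
      fix i assume i: "i < j - (b - a)"
      have "g (Suc i) = f (Suc i)" if "i < a"
      proof (cases "Suc i < a")
        case False
        with that have "Suc i = a" by simp
        with ab loop show ?thesis by (simp add: g_def)
      qed (simp add: g_def)
      then show "step (g i) (g (Suc i))"
        using f i ab by (cases "i < a") (auto simp: g_def reduces_in_def)
    qed
    with f ab show False using reduces_in_length_unique by fastforce
  qed
  then show ?thesis
    by (intro inj_onI) (metis atMost_iff linorder_neqE_nat)
qed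

function (sequential) code :: "lterm \<Rightarrow> nat list" where
  "code (Var 0) = [1]"
| "code (Var (Suc n)) = 0 # code (Var n)"
| "code (Lam s) = 2 # code s"
| "code (App s t) = 3 # code s @ code t"
  by pat_completeness auto
termination
  by (relation "measure tsize") auto

lemma tsize_pos: "0 < tsize t"
  by (cases t) auto

lemma length_code: "length (code t) = tsize t"
  by (induction t rule: code.induct) auto

lemma set_code: "set (code t) \<subseteq> {0..<4}"
  by (induction t rule: code.induct) auto

lemma code_append_eq: "code s @ r = code t @ r' \<Longrightarrow> s = t \<and> r = r'"
proof (induction s arbitrary: t r r' rule: code.induct)
  case 1
  then show ?case by (cases t rule: code.cases) auto
next
  case (2 n)
  then show ?case by (cases t rule: code.cases) auto
next
  case (3 s)
  then show ?case by (cases t rule: code.cases) auto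
next
  case (4 a b)
  from "4.prems" obtain c d where t: "t = App c d"
    by (cases t rule: code.cases) auto
  with "4.prems" have "code a @ (code b @ r) = code c @ (code d @ r')" by simp
  with "4.IH"(1) have "a = c" "code b @ r = code d @ r'" by blast+
  with "4.IH"(2) t show ?case by blast
qed

lemma inj_code: "inj code"
  by (rule injI) (use code_append_eq[where r="[]" and r'="[]"] in auto)

lemma sum_power_le_power_Suc: "2 \<le> (b::nat) \<Longrightarrow> (\<Sum>i\<le>m. b ^ i) \<le> b ^ Suc m"
proof (induction m)
  case (Suc m)
  have "b ^ Suc m + b ^ Suc m \<le> b * b ^ Suc m"
    using Suc.prems mult_le_mono1[of 2 b "b ^ Suc m"] by (simp only: mult_2)
  with Suc show ?case by simp
qed simp

lemma code_tsize_le_subset: "code ` {t. tsize t \<le> m} \<subseteq> {w. set w \<subseteq> {0..<4} \<and> length w \<le> m}"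
  using length_code set_code by auto

lemma finite_tsize_le: "finite {t. tsize t \<le> m}"
proof (rule finite_imageD)
  show "finite (code ` {t. tsize t \<le> m})"
    by (rule finite_subset[OF code_tsize_le_subset]) (simp add: finite_lists_length_le)
  show "inj_on code {t. tsize t \<le> m}"
    using inj_code by (rule inj_on_subset) simp
qed

lemma card_tsize_le: "card {t. tsize t \<le> m} \<le> 4 ^ Suc m"
proof -
  have "card {t. tsize t \<le> m} = card (code ` {t. tsize t \<le> m})"
    using inj_code by (simp add: card_image inj_on_subset)
  also have "\<dots> \<le> card {w. set w \<subseteq> {0..<4::nat} \<and> length w \<le> m}"
    by (rule card_mono[OF _ code_tsize_le_subset]) (simp add: finite_lists_length_le)
  also have "\<dots> = (\<Sum>i\<le>m. 4 ^ i)"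
    by (simp add: card_lists_length_le)
  also have "\<dots> \<le> 4 ^ Suc m"
    by (rule sum_power_le_power_Suc) simp
  finally show ?thesis .
qed

lemma Time_less_pow_Space:
  assumes f: "reduces_in s j f"
  shows "Time s < 4 ^ Suc (Space s)"
proof -
  let ?m = "Space s"
  have sub: "f ` {..j} \<subseteq> {t. tsize t \<le> ?m}"
    using Space_eq[OF f] by auto
  have "Suc j = card (f ` {..j})"
    using reduces_in_inj_on[OF f] by (simp add: card_image)
  also have "\<dots> \<le> card {t. tsize t \<le> ?m}"
    by (rule card_mono[OF finite_tsize_le sub])
  also have "\<dots> \<le> 4 ^ Suc ?m"
    by (rule card_tsize_le)
  finally show ?thesis
    using Time_eq[OF f] by simp
qed

lemma Space_pos:
  assumes f: "reduces_in s j f"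
  shows "0 < Space s"
proof -
  have "tsize (f 0) \<le> Space s"
    using Space_eq[OF f] by (simp add: Max_ge_iff)
  then show ?thesis
    using tsize_pos order.strict_trans2 by blast
qed

theorem theorem21:
  shows "\<exists>c::real. \<forall>s j f. reduces_in s j f \<and> j \<ge> 1 \<longrightarrow>
           log 2 (real (Time s)) \<le> c * real (Space s)"
proof (intro exI allI impI)
  fix s j f assume "reduces_in s j f \<and> j \<ge> 1"
  then have f: "reduces_in s j f" and T: "Time s \<ge> 1"
    using Time_eq by auto
  have "Time s < 2 ^ (2 * Suc (Space s))"
    using Time_less_pow_Space[OF f] by (simp add: power_mult)
  then have "log 2 (real (Time s)) < real (2 * Suc (Space s))"
    using T by (intro log2_of_power_less) simp_all
  also have "\<dots> \<le> 4 * real (Space s)"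
    using Space_pos[OF f] by simp
  finally show "log 2 (real (Time s)) \<le> 4 * real (Space s)"
    by simp
qed

end
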